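(* Assume Case (III) holds with $\mathrm{rank}(\mathbf H)=m$, and let $\mathbf y^\star=(\mathbf H^T\mathbf H)^{-1}\mathbf H^T\mathbf z$ be the unique least squares solution, i.e. the unique minimizer of $\|\mathbf z-\mathbf H\mathbf y\|^2$. Suppose $\mathrm G_{\sigma(t)}\equiv\mathrm G^S=(\mathrm V,\mathrm E^S)$ for a fixed bidirectional connected graph $\mathrm G^S$, and $a_{ij}(t)=a_{ji}(t)\equiv a_{ij}^S>0$ are constants. Then for every $\epsilon>0$ there exists $K_\ast(\epsilon)>0$ such that whenever $K\ge K_\ast(\epsilon)$, for every initial value $\mathbf x(0)$ the limit $\mathbf x(\infty)=\lim_{t\to\infty}\mathbf x(t)$ along the "consensus + projection" flow exists and $\|\mathbf x_i(\infty)-\mathbf y^\star\|\le\epsilon$ for all $i\in\mathrm V$.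
   Context: Setting: $N,m\ge 1$; $\mathbf H\in\mathbb R^{N\times m}$ has rows $\mathbf h_1^{T},\dots,\mathbf h_N^{T}$ with $\|\mathbf h_i\|=1$ for all $i$; $\mathbf z=(z_1,\dots,z_N)^T\in\mathbb R^N$. Let $\mathcal A_i=\{\mathbf y\in\mathbb R^m:\mathbf h_i^T\mathbf y=z_i\}$ and $\mathcal P_{\mathcal A_i}(\mathbf y)=(I-\mathbf h_i\mathbf h_i^T)\mathbf y+z_i\mathbf h_i$ the Euclidean projection onto $\mathcal A_i$. Case (III): $\mathbf z$ is not in the column space of $\mathbf H$. Network: $\mathrm V=\{1,\dots,N\}$; for a graph with arc set $\mathrm E$, $\mathrm N_i=\{j:(j,i)\in\mathrm E\}$; a graph is bidirectional if $(i,j)\in\mathrm E\iff(j,i)\in\mathrm E$, and connected if moreover strongly connected. The "consensus + projection" flow with gain $K>0$ on this fixed graph is $\dot{\mathbf x}_i=K\sum_{j\in\mathrm N_i}a_{ij}^S(\mathbf x_j-\mathbf x_i)+\mathcal P_{\mathcal A_i}(\mathbf x_i)-\mathbf x_i$, $i\in\mathrm V$, with $\mathbf x_i(t)\in\mathbb R^m$, $\mathbf x=(\mathbf x_1,\dots,\mathbf x_N)$. *)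

theory Defs
  imports "HOL-Analysis.Analysis"
begin

text \<open>Agents are indexed by a finite type 'n (so N = CARD('n)), the state space
  is real^'m (so m = CARD('m)). H :: real^'m^'n has rows h_i = H $ i.\<close>

definition proj_A :: "real^'m^'n \<Rightarrow> real^'n \<Rightarrow> 'n \<Rightarrow> real^'m \<Rightarrow> real^'m" where
  "proj_A H z i y = (y - (inner (H $ i) y) *\<^sub>R (H $ i)) + (z $ i) *\<^sub>R (H $ i)"

definition least_squares_sol :: "real^'m^'n \<Rightarrow> real^'n \<Rightarrow> real^'m" where
  "least_squares_sol H z = matrix_inv (transpose H ** H) *v (transpose H *v z)"

definition bidirectional :: "('n \<times> 'n) set \<Rightarrow> bool" where
  "bidirectional E \<longleftrightarrow> (\<forall>i j. (i, j) \<in> E \<longleftrightarrow> (j, i) \<in> E)"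

definition connected_graph :: "('n \<times> 'n) set \<Rightarrow> bool" where
  "connected_graph E \<longleftrightarrow> bidirectional E \<and> (\<forall>i j. (i, j) \<in> E\<^sup>*)"

definition neighbors :: "('n \<times> 'n) set \<Rightarrow> 'n \<Rightarrow> 'n set" where
  "neighbors E i = {j. (j, i) \<in> E}"

definition cons_proj_flow ::
  "real^'m^'n \<Rightarrow> real^'n \<Rightarrow> ('n \<times> 'n) set \<Rightarrow> ('n \<Rightarrow> 'n \<Rightarrow> real) \<Rightarrow> real
   \<Rightarrow> (real \<Rightarrow> (real^'m)^'n) \<Rightarrow> bool" where
  "cons_proj_flow H z E a K x \<longleftrightarrow>
     (\<forall>t\<ge>0. (x has_vector_derivative
        (\<chi> i. K *\<^sub>R (\<Sum>j\<in>neighbors E i. a i j *\<^sub>R (x t $ j - x t $ i))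
               + (proj_A H z i (x t $ i) - x t $ i))) (at t within {0..}))"

end

theory Submission imports Defs begin

text \<open>Stacking the agents, the flow reads x' = F x + b with
  F = K L - D, where L is the weighted graph Laplacian and D x = (h_i h_i^T x_i)_i.
  The quadratic form of -F is K times the Dirichlet energy plus the energy
  of the row projections; on a connected graph with H injective this is
  coercive, so x converges exponentially to the unique equilibrium.
  Writing the equilibrium as (y*, ..., y*) + e, the error satisfies
  F e = c with c_i = (h_i^T y* - z_i) h_i, and the normal equations give
  sum_i c_i = 0. Testing F e = c against e minus its mean shows that the
  disagreement part of e is O(1/K) and then that |e|^2 = O(1/K).\<close>

subsection \<open>Least squares\<close>

lemma invertible_gram_matrix:
  fixes H :: "real^'m^'n"
  assumes "rank H = CARD('m)"
  shows "invertible (transpose H ** H)"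
proof -
  have injH: "inj ((*v) H)" using assms full_rank_injective by blast
  have "y = 0" if "(transpose H ** H) *v y = 0" for y
  proof -
    have "(H *v y) \<bullet> (H *v y) = y \<bullet> ((transpose H ** H) *v y)"
      by (metis dot_lmul_matrix matrix_vector_mul_assoc vector_transpose_matrix
          transpose_transpose inner_commute)
    then have "H *v y = 0" using that by simp
    then show "y = 0" using injH by (metis injD matrix_vector_mult_0_right)
  qed
  then show ?thesis
    by (simp add: invertible_left_inverse matrix_left_invertible_ker)
qed

lemma least_squares_sol_normal_equation:
  fixes H :: "real^'m^'n"
  assumes "rank H = CARD('m)"
  shows "(transpose H ** H) *v least_squares_sol H z = transpose H *v z"
proof -
  have "(transpose H ** H) ** matrix_inv (transpose H ** H) = mat 1"
    using invertible_gram_matrix[OF assms] unfolding invertible_def matrix_inv_def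
    by (rule someI2_ex) auto
  then show ?thesis unfolding least_squares_sol_def
    by (metis matrix_vector_mul_assoc matrix_vector_mul_lid)
qed

lemma transpose_mult_vec_eq_sum_rows: "transpose H *v w = (\<Sum>i\<in>UNIV. w$i *\<^sub>R H$i)"
  by (rule vec_eq_iff[THEN iffD2])
    (simp add: matrix_vector_mult_def transpose_def sum_component mult.commute)

definition least_squares_residual :: "real^'m^'n \<Rightarrow> real^'n \<Rightarrow> (real^'m)^'n" where
  "least_squares_residual H z = (\<chi> i. (H$i \<bullet> least_squares_sol H z - z$i) *\<^sub>R H$i)"

lemma sum_least_squares_residual:
  fixes H :: "real^'m^'n"
  assumes "rank H = CARD('m)"
  shows "(\<Sum>i\<in>UNIV. least_squares_residual H z $ i) = 0"
proof -
  have "(\<Sum>i\<in>UNIV. least_squares_residual H z $ i)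
      = transpose H *v (H *v least_squares_sol H z - z)"
    unfolding transpose_mult_vec_eq_sum_rows least_squares_residual_def
    by (simp add: matrix_vector_mul_component)
  also have "\<dots> = (transpose H ** H) *v least_squares_sol H z - transpose H *v z"
    by (simp add: matrix_vector_mult_diff_distrib matrix_vector_mul_assoc)
  finally show ?thesis using least_squares_sol_normal_equation[OF assms] by simp
qed

subsection \<open>The Laplacian and the row projections\<close>

definition laplacian :: "('n \<times> 'n) set \<Rightarrow> ('n \<Rightarrow> 'n \<Rightarrow> real) \<Rightarrow> (real^'m)^'n \<Rightarrow> (real^'m)^'n" where
  "laplacian E a x = (\<chi> i. \<Sum>j\<in>neighbors E i. a i j *\<^sub>R (x$j - x$i))"

text \<open>The sum runs over arcs, so on a bidirectional graph every edge is counted twice;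
  hence the halves below.\<close>
definition dirichlet_energy :: "('n \<times> 'n) set \<Rightarrow> ('n \<Rightarrow> 'n \<Rightarrow> real) \<Rightarrow> (real^'m)^'n \<Rightarrow> real" where
  "dirichlet_energy E a x = (\<Sum>(j, i)\<in>E. a i j * (norm (x$j - x$i))\<^sup>2)"

definition row_projection :: "real^'m^'n \<Rightarrow> (real^'m)^'n \<Rightarrow> (real^'m)^'n" where
  "row_projection H x = (\<chi> i. (H$i \<bullet> x$i) *\<^sub>R H$i)"

definition row_energy :: "real^'m^'n \<Rightarrow> (real^'m)^'n \<Rightarrow> real" where
  "row_energy H x = (\<Sum>i\<in>UNIV. (H$i \<bullet> x$i)\<^sup>2)"

lemma cons_proj_flow_rhs:
  "(\<chi> i. K *\<^sub>R (\<Sum>j\<in>neighbors E i. a i j *\<^sub>R (x $ j - x $ i)) + (proj_A H z i (x $ i) - x $ i))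
    = K *\<^sub>R laplacian E a x - row_projection H x + (\<chi> i. z$i *\<^sub>R H$i)"
  by (rule vec_eq_iff[THEN iffD2]) (simp add: laplacian_def row_projection_def proj_A_def)

lemma linear_laplacian: "linear (laplacian E a)"
  by (rule linearI; rule vec_eq_iff[THEN iffD2])
    (simp_all add: laplacian_def sum.distrib[symmetric] scaleR_add_right scaleR_diff_right
      scaleR_sum_right, auto intro!: sum.cong simp: algebra_simps)

lemma linear_row_projection: "linear (row_projection H)"
  by (rule linearI; rule vec_eq_iff[THEN iffD2])
    (simp_all add: row_projection_def inner_add_right algebra_simps)

lemma laplacian_const: "laplacian E a (\<chi> i. w) = 0"
  by (rule vec_eq_iff[THEN iffD2]) (simp add: laplacian_def)

lemma dirichlet_energy_diff_const: "dirichlet_energy E a (x - (\<chi> i. w)) = dirichlet_energy E a x"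
  by (simp add: dirichlet_energy_def)

lemma sum_neighbors_eq_sum_arcs:
  fixes E :: "('n::finite \<times> 'n) set"
  shows "(\<Sum>i\<in>UNIV. \<Sum>j\<in>neighbors E i. f j i) = (\<Sum>(j, i)\<in>E. f j i)"
proof -
  have "(\<Sum>(j, i)\<in>E. f j i) = (\<Sum>i\<in>UNIV. \<Sum>p\<in>{p \<in> E. snd p = i}. f (fst p) (snd p))"
    unfolding case_prod_beta by (rule sum.group[symmetric]) auto
  also have "\<dots> = (\<Sum>i\<in>UNIV. \<Sum>j\<in>neighbors E i. f j i)"
    by (intro sum.cong refl sum.reindex_bij_witness[of _ "\<lambda>j. (j, _)" fst])
      (auto simp: neighbors_def)
  finally show ?thesis by simp
qed

lemma inner_laplacian:
  assumes bd: "bidirectional E" and sym: "\<And>i j. a i j = a j i"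
  shows "x \<bullet> laplacian E a x = - dirichlet_energy E a x / 2"
proof -
  define T where "T = (\<Sum>(j, i)\<in>E. a i j * (x$i \<bullet> (x$j - x$i)))"
  have "x \<bullet> laplacian E a x = (\<Sum>i\<in>UNIV. \<Sum>j\<in>neighbors E i. a i j * (x$i \<bullet> (x$j - x$i)))"
    unfolding inner_vec_def[of x] by (simp add: laplacian_def inner_sum_right)
  also have "\<dots> = T" unfolding T_def by (rule sum_neighbors_eq_sum_arcs)
  finally have lhs: "x \<bullet> laplacian E a x = T" .
  \<comment> \<open>reversing every arc leaves T unchanged\<close>
  have T_swap: "T = (\<Sum>(j, i)\<in>E. a i j * (x$j \<bullet> (x$i - x$j)))"
    unfolding T_def
    by (rule sum.reindex_bij_witness[of _ prod.swap prod.swap])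
      (use bd in \<open>auto simp: bidirectional_def sym\<close>)
  have "2 * T = (\<Sum>(j, i)\<in>E. a i j * (x$i \<bullet> (x$j - x$i) + x$j \<bullet> (x$i - x$j)))"
    by (subst mult_2, subst (2) T_swap)
      (simp add: T_def sum.distrib[symmetric] distrib_left case_prod_beta)
  also have "\<dots> = - dirichlet_energy E a x"
    unfolding dirichlet_energy_def sum_negf[symmetric]
    by (rule sum.cong[OF refl])
      (auto simp: power2_norm_eq_inner inner_diff algebra_simps inner_commute)
  finally show ?thesis using lhs by simp
qed

lemma inner_row_projection: "x \<bullet> row_projection H x = row_energy H x"
  unfolding inner_vec_def[of x]
  by (simp add: row_projection_def row_energy_def power2_eq_square inner_commute)

lemma dirichlet_energy_nonneg:
  assumes "\<And>i j. (j, i) \<in> E \<Longrightarrow> a i j > 0"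
  shows "dirichlet_energy E a x \<ge> 0"
  unfolding dirichlet_energy_def
  by (rule sum_nonneg) (auto intro!: mult_nonneg_nonneg less_imp_le[OF assms])

lemma row_energy_nonneg: "row_energy H x \<ge> 0"
  unfolding row_energy_def by (rule sum_nonneg) simp

lemma dirichlet_energy_eq_0_imp_consensus:
  assumes conn: "connected_graph E" and pos: "\<And>i j. (j, i) \<in> E \<Longrightarrow> a i j > 0"
    and "dirichlet_energy E a x = 0"
  shows "x = (\<chi> i. x $ k)"
proof -
  have "\<forall>p\<in>E. a (snd p) (fst p) * (norm (x $ fst p - x $ snd p))\<^sup>2 = 0"
    using assms(3) unfolding dirichlet_energy_def case_prod_beta
    by (subst sum_nonneg_eq_0_iff[symmetric])
      (auto intro!: mult_nonneg_nonneg less_imp_le[OF pos])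
  then have arc: "x$j = x$i" if "(j, i) \<in> E" for i j
    using that pos[OF that] by fastforce
  have "x$l = x$k" for l
  proof -
    have "(k, l) \<in> E\<^sup>*" using conn by (simp add: connected_graph_def)
    then show ?thesis by (induction rule: rtrancl_induct) (auto dest: arc)
  qed
  then show ?thesis by (simp add: vec_eq_iff[of x])
qed

lemma row_energy_const_eq_0D:
  assumes "row_energy H (\<chi> i. w) = 0"
  shows "H *v w = 0"
proof -
  have "\<forall>i\<in>UNIV. (H$i \<bullet> w)\<^sup>2 = 0"
    using assms unfolding row_energy_def by (subst sum_nonneg_eq_0_iff[symmetric]) auto
  then show ?thesis by (simp add: vec_eq_iff matrix_vector_mul_component)
qed

lemma continuous_on_dirichlet_energy: "continuous_on UNIV (dirichlet_energy E a)"
  unfolding dirichlet_energy_def case_prod_beta by (intro continuous_intros)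

lemma continuous_on_row_energy: "continuous_on UNIV (row_energy H)"
  unfolding row_energy_def by (intro continuous_intros)

lemma dirichlet_energy_scaleR: "dirichlet_energy E a (c *\<^sub>R x) = c\<^sup>2 * dirichlet_energy E a x"
  unfolding dirichlet_energy_def sum_distrib_left case_prod_beta
  by (rule sum.cong[OF refl]) (simp add: scaleR_diff_right[symmetric] power_mult_distrib)

lemma row_energy_scaleR: "row_energy H (c *\<^sub>R x) = c\<^sup>2 * row_energy H x"
  unfolding row_energy_def sum_distrib_left
  by (rule sum.cong[OF refl]) (simp add: power_mult_distrib)

subsection \<open>Coercivity\<close>

lemma quadratic_homogeneous_coercive:
  fixes f :: "'a::euclidean_space \<Rightarrow> real"
  assumes cont: "continuous_on UNIV f" and hom: "\<And>c x. f (c *\<^sub>R x) = c\<^sup>2 * f x"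
    and pos: "\<And>x. x \<noteq> 0 \<Longrightarrow> f x > 0"
  shows "\<exists>d>0. \<forall>x. d * (norm x)\<^sup>2 \<le> f x"
proof -
  obtain b :: 'a where "b \<in> Basis" using nonempty_Basis by blast
  then have "sphere 0 1 \<noteq> ({} :: 'a set)" by (auto intro!: exI[of _ b])
  then obtain u where u: "u \<in> sphere (0::'a) 1" "\<And>y. y \<in> sphere 0 1 \<Longrightarrow> f u \<le> f y"
    using continuous_attains_inf[OF compact_sphere _ continuous_on_subset[OF cont subset_UNIV]]
    by blast
  have "f u * (norm x)\<^sup>2 \<le> f x" for x
  proof (cases "x = 0")
    case True then show ?thesis using hom[of 0 x] by simp
  next
    case False
    have "f u \<le> f ((1 / norm x) *\<^sub>R x)" using u(2) False by simp
    also have "\<dots> = f x / (norm x)\<^sup>2" by (simp add: hom power_divide)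
    finally show ?thesis using False by (simp add: field_simps)
  qed
  moreover have "f u > 0" using u(1) by (intro pos) auto
  ultimately show ?thesis by blast
qed

text \<open>By connectedness the Dirichlet energy vanishes only on consensus vectors,
  so Q merely has to be definite on those.\<close>
lemma dirichlet_energy_plus_coercive:
  fixes Q :: "(real^'m)^'n \<Rightarrow> real"
  assumes conn: "connected_graph E" and pos: "\<And>i j. (j, i) \<in> E \<Longrightarrow> a i j > 0"
    and cont: "continuous_on UNIV Q" and hom: "\<And>c x. Q (c *\<^sub>R x) = c\<^sup>2 * Q x"
    and nonneg: "\<And>x. Q x \<ge> 0" and definite: "\<And>w. Q (\<chi> i. w) = 0 \<Longrightarrow> w = 0"
  shows "\<exists>d>0. \<forall>x. d * (norm x)\<^sup>2 \<le> dirichlet_energy E a x / 2 + Q x"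
proof (rule quadratic_homogeneous_coercive)
  show "continuous_on UNIV (\<lambda>x. dirichlet_energy E a x / 2 + Q x)"
    by (intro continuous_intros continuous_on_dirichlet_energy cont) auto
  show "dirichlet_energy E a (c *\<^sub>R x) / 2 + Q (c *\<^sub>R x)
      = c\<^sup>2 * (dirichlet_energy E a x / 2 + Q x)" for c x
    by (simp add: dirichlet_energy_scaleR hom algebra_simps)
  show "dirichlet_energy E a x / 2 + Q x > 0" if "x \<noteq> 0" for x
  proof (rule ccontr)
    assume "\<not> ?thesis"
    then have "dirichlet_energy E a x = 0" "Q x = 0"
      using dirichlet_energy_nonneg[of E a x, OF pos] nonneg[of x] by linarith+
    then have "x = (\<chi> i. x $ undefined)" "Q (\<chi> i. x $ undefined) = 0"
      using dirichlet_energy_eq_0_imp_consensus[of E a x, OF conn pos] by metis+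
    then have "x = 0" using definite by (metis vec_eq_iff vec_lambda_beta zero_index)
    then show False using that by simp
  qed
qed

lemma dirichlet_energy_plus_row_energy_coercive:
  fixes H :: "real^'m^'n"
  assumes "rank H = CARD('m)" "connected_graph E" "\<And>i j. (j, i) \<in> E \<Longrightarrow> a i j > 0"
  shows "\<exists>d>0. \<forall>x. d * (norm x)\<^sup>2 \<le> dirichlet_energy E a x / 2 + row_energy H x"
proof (rule dirichlet_energy_plus_coercive[OF assms(2,3)])
  have "inj ((*v) H)" using assms(1) full_rank_injective by blast
  then show "w = 0" if "row_energy H (\<chi> i. w) = 0" for w
    using row_energy_const_eq_0D[OF that] by (metis injD matrix_vector_mult_0_right)
qed (simp_all add: continuous_on_row_energy row_energy_scaleR row_energy_nonneg)

lemma dirichlet_energy_plus_sum_coercive: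
  fixes E :: "('n::finite \<times> 'n) set"
  assumes "connected_graph E" "\<And>i j. (j, i) \<in> E \<Longrightarrow> a i j > 0"
  shows "\<exists>d>0. \<forall>x :: (real^'m)^'n.
           d * (norm x)\<^sup>2 \<le> dirichlet_energy E a x / 2 + (norm (\<Sum>i\<in>UNIV. x$i))\<^sup>2"
proof (rule dirichlet_energy_plus_coercive[OF assms])
  show "(norm (\<Sum>i\<in>UNIV. (c *\<^sub>R x)$i))\<^sup>2 = c\<^sup>2 * (norm (\<Sum>i\<in>UNIV. x$i))\<^sup>2" for c x
    by (simp add: scaleR_sum_right[symmetric] power_mult_distrib)
  show "w = 0" if "(norm (\<Sum>i\<in>UNIV. ((\<chi> i. w) :: (real^'m)^'n) $ i))\<^sup>2 = 0" for w
    using that by (simp only: vec_lambda_beta sum_constant_scaleR scaleR_eq_0_iff) simp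
qed (auto intro!: continuous_intros)

subsection \<open>Convergence of the linear flow\<close>

lemma coercive_linear_flow_decay:
  fixes F :: "'a::real_inner \<Rightarrow> 'a"
  assumes flow: "\<And>t. t \<ge> 0 \<Longrightarrow> (u has_vector_derivative F (u t)) (at t within {0..})"
    and coercive: "\<And>v. d * (norm v)\<^sup>2 \<le> - (v \<bullet> F v)"
    and "t \<ge> 0"
  shows "norm (u t) \<le> norm (u 0) * exp (- d * t)"
proof -
  define W where "W s = exp (2 * d * s) * (u s \<bullet> u s)" for s
  define W' where "W' s = exp (2 * d * s) * (2 * d * (u s \<bullet> u s) + 2 * (u s \<bullet> F (u s)))"
    for s
  have dW: "(W has_real_derivative W' s) (at s within {0..})" if "s \<ge> 0" for s
  proof -
    have "((\<lambda>s. u s \<bullet> u s) has_real_derivative 2 * (u s \<bullet> F (u s))) (at s within {0..})"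
      using has_derivative_inner[OF flow[OF that, unfolded has_vector_derivative_def]
          flow[OF that, unfolded has_vector_derivative_def]]
      unfolding has_field_derivative_def
      by (rule has_derivative_eq_rhs) (auto simp: fun_eq_iff inner_commute algebra_simps)
    then show ?thesis unfolding W_def[abs_def] W'_def
      by (auto intro!: derivative_eq_intros simp: algebra_simps)
  qed
  have W'_nonpos: "W' s \<le> 0" for s
    using coercive[of "u s"] unfolding W'_def power2_norm_eq_inner
    by (intro mult_nonneg_nonpos) auto
  have "(W has_derivative (*) (W' s)) (at s within {0..t})" if "0 \<le> s" "s \<le> t" for s
    using dW[of s] that by (auto simp: has_field_derivative_def intro: has_derivative_subset)
  then obtain s where "W t - W 0 = W' s * (t - 0)"
    using mvt_very_simple[OF \<open>t \<ge> 0\<close>, of W "\<lambda>s. (*) (W' s)"] by blast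
  then have "W t - W 0 \<le> 0" using W'_nonpos[of s] \<open>t \<ge> 0\<close> by (simp add: mult_nonpos_nonneg)
  then have "(norm (u t))\<^sup>2 \<le> (norm (u 0) * exp (- d * t))\<^sup>2"
    by (simp add: W_def power2_norm_eq_inner power_mult_distrib exp_minus
        exp_double[symmetric] mult_exp_exp[symmetric] field_simps)
  then show ?thesis by (rule power2_le_imp_le) simp
qed

lemma linear_flow_tendsto_equilibrium:
  fixes F :: "'a::real_inner \<Rightarrow> 'a"
  assumes lin: "linear F"
    and flow: "\<And>t. t \<ge> 0 \<Longrightarrow> (x has_vector_derivative (F (x t) + b)) (at t within {0..})"
    and equilibrium: "F xs + b = 0"
    and "d > 0" and coercive: "\<And>v. d * (norm v)\<^sup>2 \<le> - (v \<bullet> F v)"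
  shows "(x \<longlongrightarrow> xs) at_top"
proof -
  have b: "b = - F xs" using add.inverse_unique[OF equilibrium] by simp
  have "((\<lambda>t. x t - xs) has_vector_derivative F (x t - xs)) (at t within {0..})" if "t \<ge> 0" for t
    using has_vector_derivative_diff[OF flow[OF that] has_vector_derivative_const[of xs]]
    by (simp add: b linear_diff[OF lin])
  then have decay: "norm (x t - xs) \<le> norm (x 0 - xs) * exp (- d * t)" if "t \<ge> 0" for t
    using coercive_linear_flow_decay[OF _ coercive that] by blast
  have "LIM t at_top. - d * t :> at_bot"
    using \<open>d > 0\<close>
    by (intro filterlim_tendsto_neg_mult_at_bot[OF tendsto_const]) (auto simp: filterlim_ident)
  then have "((\<lambda>t. norm (x 0 - xs) * exp (- d * t)) \<longlongrightarrow> 0) at_top"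
    by (intro tendsto_mult_right_zero filterlim_compose[OF exp_at_bot])
  then have "((\<lambda>t. x t - xs) \<longlongrightarrow> 0) at_top"
    by (rule Lim_null_comparison[rotated]) (rule eventually_at_top_linorderI[of 0], rule decay)
  then show ?thesis by (simp add: LIM_zero_iff)
qed

subsection \<open>The equilibrium\<close>

lemma consensus_operator_coercive:
  assumes bd: "bidirectional E" and sym: "\<And>i j. a i j = a j i"
    and pos: "\<And>i j. (j, i) \<in> E \<Longrightarrow> a i j > 0"
    and K: "K \<ge> 1"
    and d1: "\<And>u. d1 * (norm u)\<^sup>2 \<le> dirichlet_energy E a u / 2 + row_energy H u"
  shows "d1 * (norm x)\<^sup>2 \<le> - (x \<bullet> (K *\<^sub>R laplacian E a x - row_projection H x))"
proof -
  have "x \<bullet> (K *\<^sub>R laplacian E a x - row_projection H x)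
      = - (K * (dirichlet_energy E a x / 2)) - row_energy H x"
    by (simp add: inner_diff_right inner_laplacian[of E a x, OF bd sym] inner_row_projection)
  moreover have "dirichlet_energy E a x / 2 \<le> K * (dirichlet_energy E a x / 2)"
    using K dirichlet_energy_nonneg[of E a x, OF pos] by (simp add: mult_le_cancel_right1)
  ultimately show ?thesis using d1[of x] by linarith
qed

lemma equilibrium_error_bound:
  fixes E :: "('n::finite \<times> 'n) set" and e c :: "(real^'m)^'n"
  assumes bd: "bidirectional E" and sym: "\<And>i j. a i j = a j i"
    and pos: "\<And>i j. (j, i) \<in> E \<Longrightarrow> a i j > 0"
    and K: "K \<ge> 1"
    and d1: "\<And>u. d1 * (norm u)\<^sup>2 \<le> dirichlet_energy E a u / 2 + row_energy H u"
    and d2: "\<And>u::(real^'m)^'n. d2 * (norm u)\<^sup>2 \<le> dirichlet_energy E a u / 2 + (norm (\<Sum>i\<in>UNIV. u$i))\<^sup>2"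
    and "d2 > 0"
    and eq: "K *\<^sub>R laplacian E a e - row_projection H e = c"
    and csum: "(\<Sum>i\<in>UNIV. c$i) = 0"
  shows "d1 * d2 * K * (norm e)\<^sup>2 \<le> (norm c)\<^sup>2"
proof -
  define S where "S = dirichlet_energy E a e / 2"
  define R where "R = row_energy H e"
  define m :: "real^'m" where "m = (1 / real CARD('n)) *\<^sub>R (\<Sum>i\<in>UNIV. e$i)"
  define A where "A = norm (e - (\<chi> i. m))"
  have "S \<ge> 0" "R \<ge> 0"
    using dirichlet_energy_nonneg[of E a e, OF pos] row_energy_nonneg
    by (simp_all add: S_def R_def)
  have "(\<chi> i. m) \<bullet> c = m \<bullet> (\<Sum>i\<in>UNIV. c$i)"
    unfolding inner_vec_def[of "\<chi> i. m"] by (simp add: inner_sum_right)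
  moreover have "e \<bullet> c = - (K * S + R)"
    unfolding eq[symmetric]
    using inner_laplacian[of E a e, OF bd sym] inner_row_projection[of e H]
    by (simp add: inner_diff_right S_def R_def)
  ultimately have "(e - (\<chi> i. m)) \<bullet> c = - (K * S + R)"
    using csum by (simp add: inner_diff_left)
  then have KSR: "K * S + R \<le> A * norm c"
    using norm_cauchy_schwarz[of "e - (\<chi> i. m)" "- c"] by (simp add: A_def)
  \<comment> \<open>the disagreement part e - (m, ..., m) has zero sum, so d2 controls it by S\<close>
  have "(\<Sum>i\<in>UNIV. (e - (\<chi> i. m))$i) = (\<Sum>i\<in>UNIV. e$i) - real CARD('n) *\<^sub>R m"
    by (simp add: sum_subtractf sum_constant_scaleR scaleR_conv_of_real)
  then have "(\<Sum>i\<in>UNIV. (e - (\<chi> i. m))$i) = 0" by (simp add: m_def)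
  then have "d2 * A\<^sup>2 \<le> S"
    using d2[of "e - (\<chi> i. m)"] by (simp add: A_def S_def dirichlet_energy_diff_const)
  then have "K * (d2 * A\<^sup>2) \<le> K * S" using K by (intro mult_left_mono) auto
  also have "\<dots> \<le> A * norm c" using KSR \<open>R \<ge> 0\<close> by linarith
  finally have "K * d2 * A\<^sup>2 \<le> A * norm c" by (simp add: mult.assoc)
  then have "K * d2 * A \<le> norm c"
    by (cases "A = 0") (auto simp: power2_eq_square A_def algebra_simps)
  moreover have "d1 * (norm e)\<^sup>2 \<le> S + R" using d1[of e] by (simp add: S_def R_def)
  moreover have "S \<le> K * S" using K \<open>S \<ge> 0\<close> by (simp add: mult_le_cancel_right1)
  ultimately have "d1 * (norm e)\<^sup>2 \<le> A * norm c" using KSR by linarith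
  then have "K * d2 * (d1 * (norm e)\<^sup>2) \<le> K * d2 * A * norm c"
    using K \<open>d2 > 0\<close> by (simp add: mult.assoc mult_left_mono)
  also have "\<dots> \<le> norm c * norm c"
    using \<open>K * d2 * A \<le> norm c\<close> by (simp add: mult_right_mono)
  finally show ?thesis by (simp add: power2_eq_square algebra_simps)
qed

lemma cons_proj_flow_tendsto:
  fixes H :: "real^'m^'n"
  assumes conn: "connected_graph E" and sym: "\<And>i j. a i j = a j i"
    and pos: "\<And>i j. (j, i) \<in> E \<Longrightarrow> a i j > 0"
    and full_rank: "rank H = CARD('m)" and K: "K \<ge> 1"
    and "d1 > 0" and d1: "\<And>u. d1 * (norm u)\<^sup>2 \<le> dirichlet_energy E a u / 2 + row_energy H u"
    and "d2 > 0"
    and d2: "\<And>u::(real^'m)^'n. d2 * (norm u)\<^sup>2 \<le> dirichlet_energy E a u / 2 + (norm (\<Sum>i\<in>UNIV. u$i))\<^sup>2"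
    and flow: "cons_proj_flow H z E a K x"
  obtains xinf where "(x \<longlongrightarrow> xinf) at_top"
    and "d1 * d2 * K * (norm (xinf - (\<chi> i. least_squares_sol H z)))\<^sup>2
           \<le> (norm (least_squares_residual H z))\<^sup>2"
proof -
  have bd: "bidirectional E" using conn by (simp add: connected_graph_def)
  define F where "F u = K *\<^sub>R laplacian E a u - row_projection H u" for u
  define b :: "(real^'m)^'n" where "b = (\<chi> i. z$i *\<^sub>R H$i)"
  have lin: "linear F"
    by (rule linearI) (simp_all add: F_def linear_add[OF linear_laplacian]
        linear_add[OF linear_row_projection] linear_scale[OF linear_laplacian]
        linear_scale[OF linear_row_projection] algebra_simps)
  have coercive: "d1 * (norm u)\<^sup>2 \<le> - (u \<bullet> F u)" for u
    unfolding F_def by (rule consensus_operator_coercive[OF bd sym pos K d1])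
  have "inj F"
    unfolding linear_injective_0[OF lin]
  proof (intro allI impI)
    fix u assume "F u = 0"
    then have "d1 * (norm u)\<^sup>2 \<le> 0" using coercive[of u] by simp
    then show "u = 0" using \<open>d1 > 0\<close> by (simp add: mult_le_0_iff)
  qed
  then obtain xs where xs: "F xs = - b"
    by (metis linear_injective_imp_surjective[OF lin] surjD)
  have "(x \<longlongrightarrow> xs) at_top"
    using flow \<open>d1 > 0\<close> coercive xs
    by (intro linear_flow_tendsto_equilibrium[OF lin, of x b xs d1])
      (auto simp: cons_proj_flow_def cons_proj_flow_rhs F_def b_def)
  moreover have "F (\<chi> i. least_squares_sol H z) = - row_projection H (\<chi> i. least_squares_sol H z)"
    by (simp add: F_def laplacian_const)
  then have "F (xs - (\<chi> i. least_squares_sol H z)) = least_squares_residual H z"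
    unfolding linear_diff[OF lin] xs
    by (simp add: vec_eq_iff b_def row_projection_def least_squares_residual_def algebra_simps)
  then have "K *\<^sub>R laplacian E a (xs - (\<chi> i. least_squares_sol H z))
      - row_projection H (xs - (\<chi> i. least_squares_sol H z)) = least_squares_residual H z"
    by (simp add: F_def)
  then have "d1 * d2 * K * (norm (xs - (\<chi> i. least_squares_sol H z)))\<^sup>2
      \<le> (norm (least_squares_residual H z))\<^sup>2"
    using equilibrium_error_bound[where E=E and a=a, OF bd sym pos K d1 d2 \<open>d2 > 0\<close> _
        sum_least_squares_residual[OF full_rank]]
    by blast
  ultimately show ?thesis using that by blast
qed

lemma cons_proj_flow_limit_error:
  fixes H :: "real^'m^'n"
  assumes conn: "connected_graph E" and sym: "\<And>i j. a i j = a j i"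
    and pos: "\<And>i j. (j, i) \<in> E \<Longrightarrow> a i j > 0"
    and full_rank: "rank H = CARD('m)"
  obtains C where "C \<ge> 0"
    and "\<And>K x. K \<ge> 1 \<Longrightarrow> cons_proj_flow H z E a K x \<Longrightarrow> \<exists>xinf. (x \<longlongrightarrow> xinf) at_top \<and>
           K * (norm (xinf - (\<chi> i. least_squares_sol H z)))\<^sup>2 \<le> C"
proof -
  obtain d1 where "d1 > 0"
    and d1: "\<And>u. d1 * (norm u)\<^sup>2 \<le> dirichlet_energy E a u / 2 + row_energy H u"
    using dirichlet_energy_plus_row_energy_coercive[of H E a, OF full_rank conn pos] by blast
  obtain d2 where "d2 > 0" and d2: "\<And>u::(real^'m)^'n.
      d2 * (norm u)\<^sup>2 \<le> dirichlet_energy E a u / 2 + (norm (\<Sum>i\<in>UNIV. u$i))\<^sup>2"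
    using dirichlet_energy_plus_sum_coercive[of E a, OF conn pos] by blast
  define C where "C = (norm (least_squares_residual H z))\<^sup>2 / (d1 * d2)"
  have "\<exists>xinf. (x \<longlongrightarrow> xinf) at_top \<and> K * (norm (xinf - (\<chi> i. least_squares_sol H z)))\<^sup>2 \<le> C"
    if K: "K \<ge> 1" and flow: "cons_proj_flow H z E a K x" for K x
  proof -
    obtain xinf where "(x \<longlongrightarrow> xinf) at_top" and bound:
      "d1 * d2 * K * (norm (xinf - (\<chi> i. least_squares_sol H z)))\<^sup>2
         \<le> (norm (least_squares_residual H z))\<^sup>2"
      by (rule cons_proj_flow_tendsto[where E=E and a=a, OF conn sym pos full_rank
          K \<open>d1 > 0\<close> d1 \<open>d2 > 0\<close> d2 flow])
    moreover have "K * (norm (xinf - (\<chi> i. least_squares_sol H z)))\<^sup>2 \<le> C"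
      using bound \<open>d1 > 0\<close> \<open>d2 > 0\<close> by (simp add: C_def pos_le_divide_eq mult_ac)
    ultimately show ?thesis by blast
  qed
  moreover have "C \<ge> 0" using \<open>d1 > 0\<close> \<open>d2 > 0\<close> by (simp add: C_def)
  ultimately show ?thesis using that by blast
qed

theorem theorem6:
  fixes H :: "real^'m^'n" and z :: "real^'n"
    and E :: "('n \<times> 'n) set" and a :: "'n \<Rightarrow> 'n \<Rightarrow> real"
  assumes unit_rows: "\<And>i. norm (H $ i) = 1"
    and caseIII: "z \<notin> range (\<lambda>y. H *v y)"
    and full_rank: "rank H = CARD('m)"
    and conn: "connected_graph E"
    and sym: "\<And>i j. a i j = a j i"
    and pos: "\<And>i j. (j, i) \<in> E \<Longrightarrow> a i j > 0"
  shows "\<forall>\<epsilon>>0. \<exists>Kstar>0. \<forall>K\<ge>Kstar. \<forall>x. cons_proj_flow H z E a K x \<longrightarrow>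
           (\<exists>xinf. (x \<longlongrightarrow> xinf) at_top \<and>
              (\<forall>i. norm (xinf $ i - least_squares_sol H z) \<le> \<epsilon>))"
proof (intro allI impI)
  fix \<epsilon> :: real assume "\<epsilon> > 0"
  obtain C where "C \<ge> 0" and C: "\<And>K x. K \<ge> 1 \<Longrightarrow> cons_proj_flow H z E a K x \<Longrightarrow>
      \<exists>xinf. (x \<longlongrightarrow> xinf) at_top \<and> K * (norm (xinf - (\<chi> i. least_squares_sol H z)))\<^sup>2 \<le> C"
    using cons_proj_flow_limit_error[where E=E and a=a and z=z, OF conn sym pos full_rank]
    by blast
  define Kstar where "Kstar = max 1 (C / \<epsilon>\<^sup>2)"
  have "\<exists>xinf. (x \<longlongrightarrow> xinf) at_top \<and> (\<forall>i. norm (xinf $ i - least_squares_sol H z) \<le> \<epsilon>)"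
    if "K \<ge> Kstar" and flow: "cons_proj_flow H z E a K x" for K x
  proof -
    have "K \<ge> 1" "C \<le> K * \<epsilon>\<^sup>2"
      using that(1) \<open>\<epsilon> > 0\<close> by (simp_all add: Kstar_def pos_divide_le_eq)
    obtain xinf where lim: "(x \<longlongrightarrow> xinf) at_top"
      and "K * (norm (xinf - (\<chi> i. least_squares_sol H z)))\<^sup>2 \<le> K * \<epsilon>\<^sup>2"
      using C[OF \<open>K \<ge> 1\<close> flow] \<open>C \<le> K * \<epsilon>\<^sup>2\<close> by fastforce
    then have "(norm (xinf - (\<chi> i. least_squares_sol H z)))\<^sup>2 \<le> \<epsilon>\<^sup>2"
      using \<open>K \<ge> 1\<close> by (simp add: mult_le_cancel_left_pos)
    then have "norm (xinf - (\<chi> i. least_squares_sol H z)) \<le> \<epsilon>"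
      by (rule power2_le_imp_le) (use \<open>\<epsilon> > 0\<close> in simp)
    then have "norm (xinf $ i - least_squares_sol H z) \<le> \<epsilon>" for i
      using Finite_Cartesian_Product.norm_nth_le[of "xinf - (\<chi> i. least_squares_sol H z)" i]
      by simp
    with lim show ?thesis by blast
  qed
  then show "\<exists>Kstar>0. \<forall>K\<ge>Kstar. \<forall>x. cons_proj_flow H z E a K x \<longrightarrow>
           (\<exists>xinf. (x \<longlongrightarrow> xinf) at_top \<and> (\<forall>i. norm (xinf $ i - least_squares_sol H z) \<le> \<epsilon>))"
    by (intro exI[of _ Kstar]) (auto simp: Kstar_def)
qed

end
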